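(* Let $R\subseteq\mathbb N$ be a congruence-periodic sparse predicate, $d\in\mathbb N^+$, $\tilde R\subseteq^dR$, $n\ge2$, $\mathbf A=(A_1,\dots,A_n)$ an $n$-tuple of operators all $\neq_R0$, and $\Delta\in d\mathbb N$ sufficiently large. Let $a\in\mathbb Z$ satisfy $a>\inf\mathbf A\cdot\tilde R^n_\Delta$ and $a\le\max\{\mathbf A\cdot z:z\in\tilde R^n_\Delta,\ z_1=P^1_\Delta(a;\mathbf A,\tilde R)\}$. Then $$P_\Delta\big(a-A_1P^1_\Delta(a;\mathbf A,\tilde R);\ \mathbf A_{>1},\tilde R\big)=P^{>1}_\Delta(a;\mathbf A,\tilde R),$$ where $\mathbf A_{>1}=(A_2,\dots,A_n)$, $A_1P^1_\Delta(\cdot)$ denotes the operator $A_1$ applied to the element $P^1_\Delta(\cdot)\in\tilde R$, and $P^{>1}_\Delta(a;\mathbf A,\tilde R)$ denotes the tuple of coordinates $2,\dots,n$ of $P_\Delta(a;\mathbf A,\tilde R)$.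
   Context: Let $R\subseteq\mathbb N$ be infinite, enumerated increasingly as $(r_n)$; $\sigma:R\to R$ is the successor map, $\sigma^k$ its iterate. An operator on $R$ is $z\mapsto\sum_{i=0}^ma_i\sigma^i(z)$, $a_i\in\mathbb Z$. $A=_R0$: $Az=0$ for all $z\in R$; $A>_R0$ (resp. $<_R0$): $Az>0$ (resp. $<0$) for cofinitely many $z$. $R$ sparse: every operator satisfies (S1) $A=_R0$ or $A>_R0$ or $A<_R0$; (S2) if $A>_R0$ there is $\Delta$ with $A(\sigma^\Delta z)>z$ for all $z$. Congruence-periodic: $(r_n\bmod m)$ eventually periodic for each $m\ge1$. $\tilde R\subseteq^dR$: $\tilde R=\{r_{N+dt}:t\in\mathbb N\}$ for some $N$. For an $m$-tuple of operators $\mathbf C$, $\mathbf C\cdot z=\sum C_iz_i$, $\mathbf C\cdot S=\{\mathbf C\cdot z:z\in S\}$. $\tilde R^m_\Delta=\{z\in\tilde R^m:z_i\ge\sigma^\Delta z_{i+1}\ (1\le i\le m)\}$, $z_{m+1}:=\min\tilde R$. For an $m$-tuple $\mathbf C$ with entries $\neq_R0$ and $\Delta$ large enough that $z\mapsto\mathbf C\cdot z$ is injective on $R^m_\Delta$, $P_\Delta(x;\mathbf C,\tilde R)$ is the $z\in\tilde R^m_\Delta$ with largest $\mathbf C\cdot z$ subject to $\mathbf C\cdot z<x$ if $x>\inf\mathbf C\cdot\tilde R^m_\Delta$, and otherwise the $z\in\tilde R^m_\Delta$ minimising $\mathbf C\cdot z$; $P^i_\Delta$ is its $i$-th coordinate.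 "$\Delta$ sufficiently large" means $\Delta\ge\Delta_0$ for some suitable $\Delta_0$. *)

theory Defs
  imports Complex_Main "HOL-Library.Infinite_Set" "HOL-Library.Extended_Real"
begin

definition succR :: "nat set \<Rightarrow> nat \<Rightarrow> nat" where
  "succR R z = (LEAST y. y \<in> R \<and> z < y)"

text \<open>An operator is its coefficient list [a_0,...,a_m]; it acts by z |-> sum a_i sigma^i(z).\<close>
definition op_app :: "nat set \<Rightarrow> int list \<Rightarrow> nat \<Rightarrow> int" where
  "op_app R A z = (\<Sum>i<length A. A ! i * int ((succR R ^^ i) z))"

definition op_zero :: "nat set \<Rightarrow> int list \<Rightarrow> bool" where
  "op_zero R A \<longleftrightarrow> (\<forall>z\<in>R. op_app R A z = 0)"

definition op_pos :: "nat set \<Rightarrow> int list \<Rightarrow> bool" where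
  "op_pos R A \<longleftrightarrow> finite {z\<in>R. \<not> op_app R A z > 0}"

definition op_neg :: "nat set \<Rightarrow> int list \<Rightarrow> bool" where
  "op_neg R A \<longleftrightarrow> finite {z\<in>R. \<not> op_app R A z < 0}"

definition sparse :: "nat set \<Rightarrow> bool" where
  "sparse R \<longleftrightarrow>
     (\<forall>A. op_zero R A \<or> op_pos R A \<or> op_neg R A) \<and>
     (\<forall>A. op_pos R A \<longrightarrow> (\<exists>D. \<forall>z\<in>R. op_app R A ((succR R ^^ D) z) > int z))"

definition cong_periodic :: "nat set \<Rightarrow> bool" where
  "cong_periodic R \<longleftrightarrow>
     (\<forall>m\<ge>1. \<exists>N p. p > 0 \<and> (\<forall>n\<ge>N. enumerate R (n + p) mod m = enumerate R n mod m))"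

definition sub_d :: "nat set \<Rightarrow> nat \<Rightarrow> nat set \<Rightarrow> bool" where
  "sub_d Rt d R \<longleftrightarrow> (\<exists>N. Rt = {enumerate R (N + d * t) | t. True})"

text \<open>C . z for a tuple of operators C and a tuple z (lists, 0-indexed).\<close>
definition dotop :: "nat set \<Rightarrow> int list list \<Rightarrow> nat list \<Rightarrow> int" where
  "dotop R C z = (\<Sum>i<length C. op_app R (C ! i) (z ! i))"

text \<open>Rt^m_Delta, with z_{m+1} := min Rt; sigma is the successor map of R.\<close>
definition box :: "nat set \<Rightarrow> nat set \<Rightarrow> nat \<Rightarrow> nat \<Rightarrow> nat list set" where
  "box R Rt m D = {z. length z = m \<and> set z \<subseteq> Rt \<and>
      (\<forall>i<m. z ! i \<ge> (succR R ^^ D) (if i + 1 < m then z ! (i + 1) else Inf Rt))}"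

definition Pfun :: "nat set \<Rightarrow> nat set \<Rightarrow> nat \<Rightarrow> int list list \<Rightarrow> int \<Rightarrow> nat list" where
  "Pfun R Rt D C x =
    (let B = box R Rt (length C) D in
     if ereal (real_of_int x) > Inf ((\<lambda>z. ereal (real_of_int (dotop R C z))) ` B)
     then (THE z. z \<in> B \<and> dotop R C z < x \<and>
                 (\<forall>w\<in>B. dotop R C w < x \<longrightarrow> dotop R C w \<le> dotop R C z))
     else (THE z. z \<in> B \<and> (\<forall>w\<in>B. dotop R C z \<le> dotop R C w)))"

end

theory Submission
  imports Defs
begin

text \<open>For \<open>\<Delta>\<close> large, \<open>A\<cdot>z\<close> on \<open>R\<^sup>m\<^sub>\<Delta>\<close> is governed by the head \<open>z\<^sub>1\<close>: the increments
  \<open>A\<^sub>1(\<sigma> u) - A\<^sub>1 u\<close> of an operator \<open>A\<^sub>1 >\<^sub>R 0\<close> form again a positive operator, so by (S2) they outgrow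
  any fixed multiple of an iterate of \<open>\<sigma>\<close>, which bounds the tail contributions since
  \<open>z\<^sub>1 \<ge> \<sigma>\<^sup>\<Delta> z\<^sub>2\<close>. Thus a larger head means a larger value (a smaller one if \<open>A\<^sub>1 <\<^sub>R 0\<close>), and by
  induction \<open>z \<mapsto> A\<cdot>z\<close> is injective on the box.

  Now let \<open>A' = (A\<^sub>2, \<dots>, A\<^sub>n)\<close>, \<open>p = P(a)\<close> and let \<open>q\<close> have the same head \<open>p\<^sub>1\<close> with \<open>A\<cdot>q \<ge> a\<close>. A tail \<open>w\<close> with
  \<open>A'\<cdot>w < a - A\<^sub>1 p\<^sub>1\<close> either fits behind \<open>p\<^sub>1\<close>, and is then beaten by the tail of \<open>p\<close> by maximality
  of \<open>p\<close>; or its head exceeds the heads of both tails of \<open>p\<close> and \<open>q\<close>, and head dominance for \<open>A'\<close>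
  puts \<open>A'\<cdot>w\<close> above that of \<open>q\<close> (impossible) or below that of \<open>p\<close>.\<close>

subsection \<open>The successor map\<close>

locale infinite_nat_set =
  fixes R :: "nat set"
  assumes infinite_R: "infinite R"
begin

abbreviation \<sigma> :: "nat \<Rightarrow> nat" where "\<sigma> \<equiv> succR R"

lemma succR_exists: "\<exists>y. y \<in> R \<and> z < y"
  using infinite_R unfolding infinite_nat_iff_unbounded by blast

lemma succR_in: "\<sigma> z \<in> R" and succR_gt: "z < \<sigma> z"
  unfolding succR_def using LeastI_ex[OF succR_exists] by auto

lemma succR_least: "y \<in> R \<Longrightarrow> z < y \<Longrightarrow> \<sigma> z \<le> y"
  unfolding succR_def by (rule Least_le) simp

lemma succR_mono: "x \<le> y \<Longrightarrow> \<sigma> x \<le> \<sigma> y"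
  by (meson le_less_trans succR_gt succR_in succR_least)

lemma succR_le_cancel: "x \<in> R \<Longrightarrow> \<sigma> x \<le> \<sigma> u \<Longrightarrow> x \<le> u"
  by (meson le_less_trans not_le succR_gt succR_least)

lemma funpow_succR_in: "x \<in> R \<Longrightarrow> (\<sigma> ^^ j) x \<in> R"
  by (induction j) (auto simp: succR_in)

lemma funpow_succR_ge: "x + j \<le> (\<sigma> ^^ j) x"
proof (induction j)
  case (Suc j) then show ?case using succR_gt[of "(\<sigma> ^^ j) x"] by simp
qed simp

lemma funpow_succR_mono: "x \<le> y \<Longrightarrow> (\<sigma> ^^ j) x \<le> (\<sigma> ^^ j) y"
  by (induction j) (auto simp: succR_mono)

lemma funpow_succR_mono_exp:
  assumes "i \<le> j" shows "(\<sigma> ^^ i) x \<le> (\<sigma> ^^ j) x"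
proof -
  have "(\<sigma> ^^ j) x = (\<sigma> ^^ (j - i)) ((\<sigma> ^^ i) x)"
    using assms funpow_add[of "j - i" i \<sigma>] by simp
  then show ?thesis using funpow_succR_ge[of "(\<sigma> ^^ i) x" "j - i"] by simp
qed

lemma succR_orbit: "x \<in> R \<Longrightarrow> y \<in> R \<Longrightarrow> x \<le> y \<Longrightarrow> \<exists>j. y = (\<sigma> ^^ j) x"
proof (induction "y - x" arbitrary: x rule: less_induct)
  case less
  show ?case
  proof (cases "x = y")
    case True then show ?thesis by (metis funpow_0)
  next
    case False
    then have "\<sigma> x \<le> y" using less succR_least by simp
    moreover have "y - \<sigma> x < y - x" using succR_gt[of x] False less.prems(3) calculation by linarith
    ultimately obtain j where "y = (\<sigma> ^^ j) (\<sigma> x)" using less succR_in by blast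
    then have "y = (\<sigma> ^^ Suc j) x" by (simp only: funpow_Suc_right o_apply)
    then show ?thesis by blast
  qed
qed

lemma succR_pred:
  assumes "x' \<in> R" "x \<in> R" "x' < x"
  obtains u where "u \<in> R" "x' \<le> u" "x = \<sigma> u"
proof -
  obtain j where j: "x = (\<sigma> ^^ j) x'" using succR_orbit assms by fastforce
  with assms obtain j' where "j = Suc j'" by (cases j) auto
  then show thesis
    using that[of "(\<sigma> ^^ j') x'"] j funpow_succR_in[OF assms(1)] funpow_succR_ge[of x' j'] by simp
qed

end

subsection \<open>Growth of positive operators\<close>

lemma op_app_Cons_0: "op_app R (0 # c) z = op_app R c (succR R z)"
  unfolding op_app_def
  by (simp only: length_Cons sum.lessThan_Suc_shift nth_Cons_0 nth_Cons_Suc funpow_Suc_right o_apply)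

lemma op_app_append_0: "op_app R (c @ [0]) z = op_app R c z"
  unfolding op_app_def by (simp add: nth_append)

lemma op_app_map2_minus:
  "length c = length c' \<Longrightarrow> op_app R (map2 (-) c c') z = op_app R c z - op_app R c' z"
  unfolding op_app_def by (simp add: sum_subtractf left_diff_distrib)

definition op_diff :: "int list \<Rightarrow> int list" where
  "op_diff c = map2 (-) (0 # c) (c @ [0])"

lemma op_app_op_diff: "op_app R (op_diff c) z = op_app R c (succR R z) - op_app R c z"
  unfolding op_diff_def by (simp add: op_app_map2_minus op_app_Cons_0 op_app_append_0)

lemma op_app_uminus: "op_app R (map uminus c) z = - op_app R c z"
  unfolding op_app_def by (simp add: sum_negf)

lemma op_pos_eventually:
  assumes "op_pos R c"
  shows "\<exists>t. \<forall>z\<in>R. t \<le> z \<longrightarrow> 0 < op_app R c z"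
proof -
  obtain t where "\<forall>z\<in>{z\<in>R. \<not> 0 < op_app R c z}. z < t"
    using assms unfolding op_pos_def finite_nat_set_iff_bounded by blast
  then show ?thesis by (metis (no_types, lifting) mem_Collect_eq not_le)
qed

lemma (in infinite_nat_set) mono_of_succR_increments:
  fixes f :: "nat \<Rightarrow> int"
  assumes step: "\<forall>z\<in>R. t \<le> z \<longrightarrow> f z \<le> f (\<sigma> z)"
    and "x \<in> R" "y \<in> R" "t \<le> x" "x \<le> y"
  shows "f x \<le> f y"
proof -
  have "f x \<le> f ((\<sigma> ^^ j) x)" for j
  proof (induction j)
    case (Suc j)
    have "(\<sigma> ^^ j) x \<in> R" "t \<le> (\<sigma> ^^ j) x"
      using funpow_succR_in[OF \<open>x \<in> R\<close>] funpow_succR_ge[of x j] \<open>t \<le> x\<close> by auto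
    then show ?case using step Suc by fastforce
  qed simp
  then show ?thesis using succR_orbit[OF assms(2-3,5)] by metis
qed

locale sparse_set = infinite_nat_set +
  assumes sparse_R: "sparse R"
begin

lemma op_trichotomy: "op_zero R c \<or> op_pos R c \<or> op_neg R c"
  using sparse_R unfolding sparse_def by blast

lemma op_pos_growth: "op_pos R c \<Longrightarrow> \<exists>D. \<forall>z\<in>R. int z < op_app R c ((\<sigma> ^^ D) z)"
  using sparse_R unfolding sparse_def by blast

lemma not_op_pos_eventually_nonpos:
  assumes "\<not> op_pos R c"
  shows "\<exists>t. \<forall>z\<in>R. t \<le> z \<longrightarrow> op_app R c z \<le> 0"
proof -
  have "op_zero R c \<or> op_neg R c" using op_trichotomy assms by blast
  then show ?thesis
  proof
    assume "op_zero R c" then show ?thesis unfolding op_zero_def by auto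
  next
    assume "op_neg R c"
    then obtain t where "\<forall>z\<in>{z\<in>R. \<not> op_app R c z < 0}. z < t"
      unfolding op_neg_def finite_nat_set_iff_bounded by blast
    then show ?thesis by (metis (no_types, lifting) mem_Collect_eq not_le less_le)
  qed
qed

text \<open>If the increments of a positive operator were eventually non-positive, its values would
  stay bounded along an orbit, contradicting the growth axiom (S2).\<close>
lemma op_pos_op_diff:
  assumes pos: "op_pos R c"
  shows "op_pos R (op_diff c)"
proof (rule ccontr)
  assume "\<not> op_pos R (op_diff c)"
  then obtain t where t: "\<forall>z\<in>R. t \<le> z \<longrightarrow> op_app R c (\<sigma> z) \<le> op_app R c z"
    using not_op_pos_eventually_nonpos[of "op_diff c"] unfolding op_app_op_diff by auto
  obtain w where w: "w \<in> R" "t \<le> w"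
    using infinite_R unfolding infinite_nat_iff_unbounded_le by blast
  obtain D where D: "\<forall>z\<in>R. int z < op_app R c ((\<sigma> ^^ D) z)" using op_pos_growth[OF pos] by blast
  define j where "j = nat (op_app R c w) + 1"
  have "int ((\<sigma> ^^ j) w) < op_app R c ((\<sigma> ^^ D) ((\<sigma> ^^ j) w))"
    using D funpow_succR_in[OF w(1)] by blast
  also have "\<dots> \<le> op_app R c w"
  proof -
    have "(\<sigma> ^^ D) ((\<sigma> ^^ j) w) \<in> R" "w \<le> (\<sigma> ^^ D) ((\<sigma> ^^ j) w)"
      using funpow_succR_in[OF w(1), of "D + j"] funpow_succR_ge[of w "D + j"]
      by (simp_all add: funpow_add)
    then show ?thesis
      using mono_of_succR_increments[of t "\<lambda>z. - op_app R c z"] t w by simp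
  qed
  finally show False using funpow_succR_ge[of w j] unfolding j_def by linarith
qed

lemma op_pos_eventually_mono:
  assumes "op_pos R c"
  shows "\<exists>t. \<forall>x\<in>R. \<forall>y\<in>R. t \<le> x \<longrightarrow> x \<le> y \<longrightarrow> op_app R c x \<le> op_app R c y"
proof -
  obtain t where "\<forall>z\<in>R. t \<le> z \<longrightarrow> op_app R c z \<le> op_app R c (\<sigma> z)"
    using op_pos_eventually[OF op_pos_op_diff[OF assms]] unfolding op_app_op_diff
    by (meson less_imp_le diff_gt_0_iff_gt)
  then show ?thesis using mono_of_succR_increments by blast
qed

lemma funpow_succR_doubles: "\<exists>j. \<forall>z\<in>R. 2 * z \<le> (\<sigma> ^^ j) z"
proof -
  have gap: "op_app R [-1, 1] z = int (\<sigma> z) - int z" for z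
    unfolding op_app_def by (simp add: numeral_2_eq_2)
  have "op_pos R [-1, 1]" unfolding op_pos_def gap using succR_gt by simp
  then obtain D where D: "\<forall>z\<in>R. int z < op_app R [-1, 1] ((\<sigma> ^^ D) z)"
    using op_pos_growth by blast
  have "2 * z \<le> (\<sigma> ^^ Suc D) z" if "z \<in> R" for z
    using D that gap funpow_succR_ge[of z D] by fastforce
  then show ?thesis by blast
qed

lemma funpow_succR_exp: "\<exists>j. \<forall>t. \<forall>z\<in>R. 2 ^ t * z \<le> (\<sigma> ^^ (j * t)) z"
proof -
  obtain j where j: "\<forall>z\<in>R. 2 * z \<le> (\<sigma> ^^ j) z" using funpow_succR_doubles by blast
  have "2 ^ t * z \<le> (\<sigma> ^^ (j * t)) z" if "z \<in> R" for t z
  proof (induction t)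
    case (Suc t)
    have "2 * (\<sigma> ^^ (j * t)) z \<le> (\<sigma> ^^ j) ((\<sigma> ^^ (j * t)) z)"
      using j funpow_succR_in[OF that] by blast
    also have "\<dots> = (\<sigma> ^^ (j * Suc t)) z" by (simp add: funpow_add)
    finally show ?case using Suc by simp
  qed simp
  then show ?thesis by blast
qed

lemma op_pos_dominates:
  assumes "op_pos R c"
  shows "\<exists>E. \<forall>y\<in>R. int k * int ((\<sigma> ^^ L) y) < op_app R c ((\<sigma> ^^ E) y)"
proof -
  obtain D where D: "\<forall>z\<in>R. int z < op_app R c ((\<sigma> ^^ D) z)" using op_pos_growth[OF assms] by blast
  obtain j where j: "\<forall>t. \<forall>z\<in>R. 2 ^ t * z \<le> (\<sigma> ^^ (j * t)) z" using funpow_succR_exp by blast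
  have "int k * int ((\<sigma> ^^ L) y) < op_app R c ((\<sigma> ^^ (D + j * k + L)) y)" if "y \<in> R" for y
  proof -
    define w where "w = (\<sigma> ^^ (j * k)) ((\<sigma> ^^ L) y)"
    have "k * (\<sigma> ^^ L) y \<le> 2 ^ k * (\<sigma> ^^ L) y" using less_exp[of k] by simp
    also have "\<dots> \<le> w" unfolding w_def using j funpow_succR_in[OF that] by blast
    finally have "int k * int ((\<sigma> ^^ L) y) \<le> int w" by (metis of_nat_le_iff of_nat_mult)
    also have "\<dots> < op_app R c ((\<sigma> ^^ D) w)"
      using D funpow_succR_in[OF funpow_succR_in[OF that]] unfolding w_def by blast
    also have "(\<sigma> ^^ D) w = (\<sigma> ^^ (D + j * k + L)) y" unfolding w_def by (simp add: funpow_add)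
    finally show ?thesis .
  qed
  then show ?thesis by blast
qed

text \<open>With \<open>x = \<sigma> u\<close>, \<open>c x - c x' \<ge> c (\<sigma> u) - c u\<close>, an increment of \<open>c\<close>; the increments form a
  positive operator, hence eventually exceed any multiple of a fixed iterate of \<open>\<sigma>\<close>.\<close>
lemma op_pos_eventually_gap:
  assumes pos: "op_pos R c" and "0 \<le> K"
  shows "\<exists>T. \<forall>x\<in>R. \<forall>x'\<in>R. \<forall>y\<in>R. T \<le> x' \<longrightarrow> x' < x \<longrightarrow> (\<sigma> ^^ T) y \<le> x \<longrightarrow>
           K * int ((\<sigma> ^^ L) y) < op_app R c x - op_app R c x'"
proof -
  obtain t1 where t1: "\<forall>x\<in>R. \<forall>y\<in>R. t1 \<le> x \<longrightarrow> x \<le> y \<longrightarrow> op_app R c x \<le> op_app R c y"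
    using op_pos_eventually_mono[OF pos] by blast
  obtain t2 where t2: "\<forall>x\<in>R. \<forall>y\<in>R. t2 \<le> x \<longrightarrow> x \<le> y \<longrightarrow>
      op_app R (op_diff c) x \<le> op_app R (op_diff c) y"
    using op_pos_eventually_mono[OF op_pos_op_diff[OF pos]] by blast
  obtain E where E: "\<forall>y\<in>R. int (nat K) * int ((\<sigma> ^^ L) y) < op_app R (op_diff c) ((\<sigma> ^^ E) y)"
    using op_pos_dominates[OF op_pos_op_diff[OF pos]] by blast
  have gap: "K * int ((\<sigma> ^^ L) y) < op_app R c x - op_app R c x'"
    if x: "x \<in> R" "x' \<in> R" "y \<in> R" "Suc (E + t2 + t1) \<le> x'" "x' < x"
      "(\<sigma> ^^ Suc (E + t2 + t1)) y \<le> x" for x x' y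
  proof -
    obtain u where u: "u \<in> R" "x' \<le> u" "x = \<sigma> u" using succR_pred x(1,2,5) by blast
    have "(\<sigma> ^^ (E + t2 + t1)) y \<le> u"
      using succR_le_cancel[OF funpow_succR_in[OF x(3)]] x(6) u(3) by simp
    then have yu: "(\<sigma> ^^ (E + t2)) y \<le> u"
      using funpow_succR_mono_exp[of "E + t2" "E + t2 + t1" y] by linarith
    have "y \<le> (\<sigma> ^^ t2) y" using funpow_succR_ge[of y t2] by linarith
    then have "(\<sigma> ^^ L) y \<le> (\<sigma> ^^ L) ((\<sigma> ^^ t2) y)" by (rule funpow_succR_mono)
    then have "K * int ((\<sigma> ^^ L) y) \<le> int (nat K) * int ((\<sigma> ^^ L) ((\<sigma> ^^ t2) y))"
      using \<open>0 \<le> K\<close> by (simp add: mult_left_mono)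
    also have "\<dots> < op_app R (op_diff c) ((\<sigma> ^^ (E + t2)) y)"
      using E funpow_succR_in[OF x(3)] by (simp add: funpow_add)
    also have "\<dots> \<le> op_app R (op_diff c) u"
      using t2 funpow_succR_in[OF x(3)] u(1) yu funpow_succR_ge[of y "E + t2"] by simp
    also have "\<dots> \<le> op_app R c x - op_app R c x'"
      using t1 x u unfolding op_app_op_diff by fastforce
    finally show ?thesis .
  qed
  then show ?thesis by blast
qed

end

subsection \<open>Head dominance on boxes\<close>

lemma Cons_in_box_iff:
  "x # w \<in> box R Rt (Suc m) D \<longleftrightarrow>
     x \<in> Rt \<and> (succR R ^^ D) (if m = 0 then Inf Rt else hd w) \<le> x \<and> w \<in> box R Rt m D"
  unfolding box_def All_less_Suc2 by (cases w) auto

lemma in_box_SucE: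
  assumes "z \<in> box R Rt (Suc m) D"
  obtains x w where "z = x # w" "x \<in> Rt" "(succR R ^^ D) (if m = 0 then Inf Rt else hd w) \<le> x"
    "w \<in> box R Rt m D"
  using assms Cons_in_box_iff by (cases z) (auto simp: box_def)

lemma box_0: "box R Rt 0 D = {[]}"
  unfolding box_def by auto

lemma (in infinite_nat_set) box_set_bounds:
  "z \<in> box R Rt m D \<Longrightarrow> v \<in> set z \<Longrightarrow> D \<le> v \<and> v \<le> hd z"
proof (induction m arbitrary: z)
  case (Suc m)
  then obtain x w where z: "z = x # w" "(\<sigma> ^^ D) (if m = 0 then Inf Rt else hd w) \<le> x"
      "w \<in> box R Rt m D"
    by (auto elim: in_box_SucE)
  have "D \<le> x" using z(2) funpow_succR_ge[of _ D] le_trans le_add2 by blast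
  moreover have "v \<le> x" if "v \<in> set w"
  proof -
    have "m \<noteq> 0" using z(3) that by (auto simp: box_def)
    then have "hd w \<le> x" using z(2) funpow_succR_ge[of "hd w" D] by simp
    then show ?thesis using Suc.IH[OF z(3) that] by simp
  qed
  ultimately show ?case using Suc.IH[OF z(3)] Suc.prems(2) z(1) by auto
qed (simp add: box_0)

lemma dotop_Nil: "dotop R [] w = 0"
  unfolding dotop_def by simp

lemma dotop_Cons: "dotop R (c # Cs) (x # w) = op_app R c x + dotop R Cs w"
  unfolding dotop_def by (simp only: length_Cons sum.lessThan_Suc_shift nth_Cons_0 nth_Cons_Suc)

lemma dotop_uminus: "dotop R (map (map uminus) C) z = - dotop R C z"
  unfolding dotop_def by (simp add: op_app_uminus sum_negf)

definition coeff_abs_sum :: "int list list \<Rightarrow> int" where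
  "coeff_abs_sum Cs = (\<Sum>c\<leftarrow>Cs. \<Sum>a\<leftarrow>c. \<bar>a\<bar>)"

definition coeff_count :: "int list list \<Rightarrow> nat" where
  "coeff_count Cs = (\<Sum>c\<leftarrow>Cs. length c)"

lemma (in infinite_nat_set) op_app_abs_le:
  assumes "length c \<le> L" "z \<le> b"
  shows "\<bar>op_app R c z\<bar> \<le> (\<Sum>a\<leftarrow>c. \<bar>a\<bar>) * int ((\<sigma> ^^ L) b)"
proof -
  have "\<bar>op_app R c z\<bar> \<le> (\<Sum>i<length c. \<bar>c ! i * int ((\<sigma> ^^ i) z)\<bar>)"
    unfolding op_app_def by (rule sum_abs)
  also have "\<dots> \<le> (\<Sum>i<length c. \<bar>c ! i\<bar> * int ((\<sigma> ^^ L) b))"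
  proof (rule sum_mono)
    fix i assume "i \<in> {..<length c}"
    then have "(\<sigma> ^^ i) z \<le> (\<sigma> ^^ L) b"
      using assms funpow_succR_mono_exp[of i L] funpow_succR_mono[of z b] le_trans by fastforce
    then show "\<bar>c ! i * int ((\<sigma> ^^ i) z)\<bar> \<le> \<bar>c ! i\<bar> * int ((\<sigma> ^^ L) b)"
      by (simp add: abs_mult mult_left_mono)
  qed
  also have "\<dots> = (\<Sum>a\<leftarrow>c. \<bar>a\<bar>) * int ((\<sigma> ^^ L) b)"
    by (simp add: sum_distrib_right sum_list_sum_nth atLeast0LessThan)
  finally show ?thesis .
qed

lemma (in infinite_nat_set) dotop_abs_le:
  "length w = length Cs \<Longrightarrow> \<forall>v\<in>set w. v \<le> b \<Longrightarrow> coeff_count Cs \<le> L \<Longrightarrow>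
     \<bar>dotop R Cs w\<bar> \<le> coeff_abs_sum Cs * int ((\<sigma> ^^ L) b)"
proof (induction Cs arbitrary: w)
  case (Cons c Cs)
  then obtain v w' where w: "w = v # w'" by (cases w) auto
  have "\<bar>op_app R c v\<bar> \<le> (\<Sum>a\<leftarrow>c. \<bar>a\<bar>) * int ((\<sigma> ^^ L) b)"
    using Cons.prems w by (intro op_app_abs_le) (auto simp: coeff_count_def)
  moreover have "\<bar>dotop R Cs w'\<bar> \<le> coeff_abs_sum Cs * int ((\<sigma> ^^ L) b)"
    using Cons.prems w by (intro Cons.IH) (auto simp: coeff_count_def)
  ultimately show ?case
    unfolding w dotop_Cons coeff_abs_sum_def by (simp add: distrib_right)
qed (simp add: dotop_Nil coeff_abs_sum_def)

lemma (in infinite_nat_set) box_tails_bound: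
  assumes RtR: "Rt \<subseteq> R"
    and z: "x # w \<in> box R Rt (Suc (length Cs)) D" and z': "x' # w' \<in> box R Rt (Suc (length Cs)) D"
    and "x' \<le> x"
  obtains y where "y \<in> R" "(\<sigma> ^^ D) y \<le> x"
    "\<bar>dotop R Cs w\<bar> \<le> coeff_abs_sum Cs * int ((\<sigma> ^^ coeff_count Cs) y)"
    "\<bar>dotop R Cs w'\<bar> \<le> coeff_abs_sum Cs * int ((\<sigma> ^^ coeff_count Cs) y)"
proof (cases Cs)
  case Nil
  have "x \<in> Rt" "(\<sigma> ^^ D) (Inf Rt) \<le> x" using z Nil by (simp_all add: Cons_in_box_iff)
  then have "Inf Rt \<in> R" using RtR Inf_nat_def1 by blast
  then show thesis
    using that \<open>(\<sigma> ^^ D) (Inf Rt) \<le> x\<close> Nil by (simp add: dotop_Nil coeff_abs_sum_def)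
next
  case (Cons c Cs')
  have w: "w \<in> box R Rt (length Cs) D" "(\<sigma> ^^ D) (hd w) \<le> x"
    and w': "w' \<in> box R Rt (length Cs) D" "(\<sigma> ^^ D) (hd w') \<le> x'"
    using z z' Cons by (simp_all add: Cons_in_box_iff)
  define y where "y = max (hd w) (hd w')"
  have "w \<noteq> []" "w' \<noteq> []" using w(1) w'(1) Cons by (auto simp: box_def)
  moreover have "set w \<subseteq> Rt" "set w' \<subseteq> Rt" using w(1) w'(1) by (auto simp: box_def)
  ultimately have "hd w \<in> R" "hd w' \<in> R" using RtR hd_in_set by blast+
  then have "y \<in> R" unfolding y_def by (simp add: max_def)
  moreover have "(\<sigma> ^^ D) y \<le> x" using w(2) w'(2) \<open>x' \<le> x\<close> unfolding y_def by (simp add: max_def)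
  moreover have "\<bar>dotop R Cs u\<bar> \<le> coeff_abs_sum Cs * int ((\<sigma> ^^ coeff_count Cs) y)"
    if "u \<in> box R Rt (length Cs) D" "hd u \<le> y" for u
    using that box_set_bounds[OF that(1)] by (intro dotop_abs_le) (force simp: box_def)+
  ultimately show thesis using that w(1) w'(1) unfolding y_def by simp
qed

definition hd_dominant :: "nat set \<Rightarrow> nat set \<Rightarrow> nat \<Rightarrow> int list list \<Rightarrow> bool" where
  "hd_dominant R Rt D C \<longleftrightarrow>
     (\<forall>z\<in>box R Rt (length C) D. \<forall>z'\<in>box R Rt (length C) D. hd z' < hd z \<longrightarrow> dotop R C z' < dotop R C z)"

lemma (in sparse_set) eventually_hd_dominant:
  assumes RtR: "Rt \<subseteq> R" and pos: "op_pos R c"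
  shows "eventually (\<lambda>D. hd_dominant R Rt D (c # Cs)) sequentially"
proof -
  have "0 \<le> 2 * coeff_abs_sum Cs" unfolding coeff_abs_sum_def by (auto intro!: sum_list_nonneg)
  from op_pos_eventually_gap[OF pos this, of "coeff_count Cs"] obtain T where T:
    "\<forall>x\<in>R. \<forall>x'\<in>R. \<forall>y\<in>R. T \<le> x' \<longrightarrow> x' < x \<longrightarrow> (\<sigma> ^^ T) y \<le> x \<longrightarrow>
       2 * coeff_abs_sum Cs * int ((\<sigma> ^^ coeff_count Cs) y) < op_app R c x - op_app R c x'"
    by blast
  have "hd_dominant R Rt D (c # Cs)" if "T \<le> D" for D
    unfolding hd_dominant_def
  proof (intro ballI impI)
    fix z z' assume z: "z \<in> box R Rt (length (c # Cs)) D" and z': "z' \<in> box R Rt (length (c # Cs)) D"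
      and lt: "hd z' < hd z"
    obtain x w where zx: "z = x # w" using z by (auto elim: in_box_SucE)
    obtain x' w' where zx': "z' = x' # w'" using z' by (auto elim: in_box_SucE)
    have "x \<in> R" "x' \<in> R" using z z' zx zx' RtR by (auto simp: box_def)
    have "T \<le> x'" using box_set_bounds[OF z', of x'] zx' \<open>T \<le> D\<close> by simp
    obtain y where y: "y \<in> R" "(\<sigma> ^^ D) y \<le> x"
      "\<bar>dotop R Cs w\<bar> \<le> coeff_abs_sum Cs * int ((\<sigma> ^^ coeff_count Cs) y)"
      "\<bar>dotop R Cs w'\<bar> \<le> coeff_abs_sum Cs * int ((\<sigma> ^^ coeff_count Cs) y)"
      using box_tails_bound[OF RtR, of x w Cs D x' w'] z z' zx zx' lt by auto
    have "(\<sigma> ^^ T) y \<le> x" using y(2) funpow_succR_mono_exp[OF \<open>T \<le> D\<close>, of y] by linarith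
    then have "2 * coeff_abs_sum Cs * int ((\<sigma> ^^ coeff_count Cs) y) < op_app R c x - op_app R c x'"
      using T \<open>x \<in> R\<close> \<open>x' \<in> R\<close> y(1) \<open>T \<le> x'\<close> lt zx zx' by simp
    then show "dotop R (c # Cs) z' < dotop R (c # Cs) z"
      using y(3,4) unfolding zx zx' dotop_Cons by linarith
  qed
  then show ?thesis unfolding eventually_sequentially by blast
qed

lemma (in sparse_set) eventually_hd_dominant_signed:
  assumes RtR: "Rt \<subseteq> R" and "\<not> op_zero R c"
  shows "eventually (\<lambda>D. hd_dominant R Rt D (c # Cs) \<or>
           hd_dominant R Rt D (map (map uminus) (c # Cs))) sequentially"
proof -
  have "op_pos R c \<or> op_pos R (map uminus c)"
    using op_trichotomy[of c] assms(2) unfolding op_pos_def op_neg_def op_app_uminus by simp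
  then show ?thesis
  proof
    assume "op_pos R c"
    from eventually_hd_dominant[OF RtR this, of Cs] show ?thesis by (auto elim: eventually_mono)
  next
    assume "op_pos R (map uminus c)"
    from eventually_hd_dominant[OF RtR this, of "map (map uminus) Cs"] show ?thesis
      by (auto elim: eventually_mono)
  qed
qed

lemma hd_dominant_signed_imp_neq:
  assumes "hd_dominant R Rt D C \<or> hd_dominant R Rt D (map (map uminus) C)"
    and "z \<in> box R Rt (length C) D" "z' \<in> box R Rt (length C) D" "hd z \<noteq> hd z'"
  shows "dotop R C z \<noteq> dotop R C z'"
proof -
  have "hd z < hd z' \<or> hd z' < hd z" using assms(4) by linarith
  then show ?thesis using assms(1-3) unfolding hd_dominant_def dotop_uminus length_map by force
qed

lemma inj_on_box_Cons:
  assumes dom: "hd_dominant R Rt D (c # Cs) \<or> hd_dominant R Rt D (map (map uminus) (c # Cs))"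
    and inj: "inj_on (dotop R Cs) (box R Rt (length Cs) D)"
  shows "inj_on (dotop R (c # Cs)) (box R Rt (length (c # Cs)) D)"
proof (rule inj_onI)
  fix z z' assume z: "z \<in> box R Rt (length (c # Cs)) D" and z': "z' \<in> box R Rt (length (c # Cs)) D"
    and eq: "dotop R (c # Cs) z = dotop R (c # Cs) z'"
  have "hd z = hd z'" using hd_dominant_signed_imp_neq[OF dom z z'] eq by blast
  moreover obtain x w where "z = x # w" "w \<in> box R Rt (length Cs) D" using z by (auto elim: in_box_SucE)
  moreover obtain x' w' where "z' = x' # w'" "w' \<in> box R Rt (length Cs) D"
    using z' by (auto elim: in_box_SucE)
  ultimately show "z = z'" using eq inj by (auto simp: dotop_Cons dest: inj_onD)
qed

lemma (in sparse_set) eventually_inj_on_dotop: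
  assumes RtR: "Rt \<subseteq> R"
  shows "\<forall>c\<in>set C. \<not> op_zero R c \<Longrightarrow>
    eventually (\<lambda>D. inj_on (dotop R C) (box R Rt (length C) D)) sequentially"
proof (induction C)
  case Nil
  then show ?case by (simp add: box_0)
next
  case (Cons c Cs)
  then have "eventually (\<lambda>D. inj_on (dotop R Cs) (box R Rt (length Cs) D) \<and>
      (hd_dominant R Rt D (c # Cs) \<or> hd_dominant R Rt D (map (map uminus) (c # Cs)))) sequentially"
    using eventually_hd_dominant_signed[OF RtR] by (simp add: eventually_conj)
  then show ?case by (rule eventually_mono) (blast intro: inj_on_box_Cons)
qed

subsection \<open>The predecessor function\<close>

lemma int_cSup_mem:
  fixes X :: "int set"
  assumes "X \<noteq> {}" "bdd_above X"
  shows "Sup X \<in> X"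
proof -
  obtain x where "x \<in> X" "Sup X - 1 < x" using less_cSup_iff[OF assms, of "Sup X - 1"] by auto
  moreover have "x \<le> Sup X" using cSup_upper[OF \<open>x \<in> X\<close> assms(2)] .
  ultimately have "x = Sup X" by linarith
  with \<open>x \<in> X\<close> show ?thesis by simp
qed

lemma Pfun_eqI:
  assumes inj: "inj_on (dotop R C) (box R Rt (length C) D)"
    and p: "p \<in> box R Rt (length C) D" "dotop R C p < x"
      "\<forall>w\<in>box R Rt (length C) D. dotop R C w < x \<longrightarrow> dotop R C w \<le> dotop R C p"
  shows "Pfun R Rt D C x = p"
proof -
  let ?B = "box R Rt (length C) D"
  have "Inf ((\<lambda>z. ereal (real_of_int (dotop R C z))) ` ?B) \<le> ereal (real_of_int (dotop R C p))"
    using p(1) by (rule INF_lower)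
  also have "\<dots> < ereal (real_of_int x)" using p(2) by simp
  finally have "Pfun R Rt D C x =
      (THE z. z \<in> ?B \<and> dotop R C z < x \<and> (\<forall>w\<in>?B. dotop R C w < x \<longrightarrow> dotop R C w \<le> dotop R C z))"
    unfolding Pfun_def Let_def by simp
  also have "\<dots> = p"
  proof (rule the_equality)
    fix z assume "z \<in> ?B \<and> dotop R C z < x \<and> (\<forall>w\<in>?B. dotop R C w < x \<longrightarrow> dotop R C w \<le> dotop R C z)"
    then show "z = p" using p inj by (meson antisym inj_onD)
  qed (use p in blast)
  finally show ?thesis .
qed

lemma Pfun_below:
  assumes inj: "inj_on (dotop R C) (box R Rt (length C) D)"
    and x: "Inf ((\<lambda>z. ereal (real_of_int (dotop R C z))) ` box R Rt (length C) D) < ereal (real_of_int x)"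
  shows "Pfun R Rt D C x \<in> box R Rt (length C) D \<and> dotop R C (Pfun R Rt D C x) < x \<and>
    (\<forall>w\<in>box R Rt (length C) D. dotop R C w < x \<longrightarrow> dotop R C w \<le> dotop R C (Pfun R Rt D C x))"
proof -
  let ?B = "box R Rt (length C) D"
  define X where "X = dotop R C ` {w \<in> ?B. dotop R C w < x}"
  have "X \<noteq> {}" using x unfolding X_def by (auto simp: Inf_less_iff)
  moreover have "bdd_above X" unfolding X_def by (auto intro!: bdd_aboveI[of _ x])
  ultimately have "Sup X \<in> X" by (rule int_cSup_mem)
  then obtain p where p: "p \<in> ?B" "dotop R C p < x" "dotop R C p = Sup X"
    unfolding X_def by auto
  have "\<forall>w\<in>?B. dotop R C w < x \<longrightarrow> dotop R C w \<le> dotop R C p"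
    using cSup_upper[OF _ \<open>bdd_above X\<close>] p(3) unfolding X_def by auto
  with p Pfun_eqI[OF inj] show ?thesis by simp
qed

lemma (in infinite_nat_set) finite_box_hd: "finite {z \<in> box R Rt m D. hd z = x}"
proof (rule finite_subset)
  show "{z \<in> box R Rt m D. hd z = x} \<subseteq> {z. set z \<subseteq> {..x} \<and> length z = m}"
  proof (rule subsetI, rule CollectI, rule conjI)
    fix z assume z: "z \<in> {z \<in> box R Rt m D. hd z = x}"
    then show "set z \<subseteq> {..x}" using box_set_bounds[of z Rt m D] by auto
    show "length z = m" using z by (simp add: box_def)
  qed
qed (rule finite_lists_length_eq, simp)

lemma (in infinite_nat_set) Max_box_hd_witness:
  assumes "x # w \<in> box R Rt (Suc m) D"
    and "a \<le> Max {dotop R C z |z. z \<in> box R Rt (Suc m) D \<and> hd z = x}"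
  obtains w' where "x # w' \<in> box R Rt (Suc m) D" "a \<le> dotop R C (x # w')"
proof -
  let ?S = "{dotop R C z |z. z \<in> box R Rt (Suc m) D \<and> hd z = x}"
  have "finite ?S" using finite_box_hd[of Rt "Suc m" D x] by (simp add: setcompr_eq_image)
  moreover have "?S \<noteq> {}" using assms(1) by auto
  ultimately have "Max ?S \<in> ?S" by (rule Max_in)
  then obtain z where z: "z \<in> box R Rt (Suc m) D" "hd z = x" "a \<le> dotop R C z"
    using assms(2) by auto
  moreover obtain x' w' where "z = x' # w'" using z(1) by (auto elim: in_box_SucE)
  ultimately show thesis using that by simp
qed

lemma (in infinite_nat_set) Pfun_Cons_tl:
  assumes inj: "inj_on (dotop R (c # Cs)) (box R Rt (length (c # Cs)) D)"
    and inj_tl: "inj_on (dotop R Cs) (box R Rt (length Cs) D)"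
    and dom: "hd_dominant R Rt D Cs \<or> hd_dominant R Rt D (map (map uminus) Cs)"
    and "Cs \<noteq> []"
    and below: "ereal (real_of_int a) >
      Inf ((\<lambda>z. ereal (real_of_int (dotop R (c # Cs) z))) ` box R Rt (length (c # Cs)) D)"
    and above: "a \<le> Max {dotop R (c # Cs) z |z. z \<in> box R Rt (length (c # Cs)) D \<and>
      hd z = hd (Pfun R Rt D (c # Cs) a)}"
  shows "Pfun R Rt D Cs (a - op_app R c (hd (Pfun R Rt D (c # Cs) a))) = tl (Pfun R Rt D (c # Cs) a)"
proof -
  let ?B = "box R Rt (length (c # Cs)) D" and ?B' = "box R Rt (length Cs) D"
  obtain p where p: "p \<in> ?B" "dotop R (c # Cs) p < a"
    "\<forall>w\<in>?B. dotop R (c # Cs) w < a \<longrightarrow> dotop R (c # Cs) w \<le> dotop R (c # Cs) p"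
    and Pa: "Pfun R Rt D (c # Cs) a = p"
    using Pfun_below[OF inj below] by blast
  obtain x pt where pt: "p = x # pt" "x \<in> Rt" "(\<sigma> ^^ D) (hd pt) \<le> x" "pt \<in> ?B'"
    using p(1) \<open>Cs \<noteq> []\<close> by (auto elim: in_box_SucE)
  obtain qt where qt: "x # qt \<in> ?B" "a \<le> dotop R (c # Cs) (x # qt)"
    using Max_box_hd_witness[of x pt Rt "length Cs" D a "c # Cs"] p(1) above
    unfolding Pa pt(1) by auto
  have qt': "qt \<in> ?B'" "(\<sigma> ^^ D) (hd qt) \<le> x"
    using qt(1) \<open>Cs \<noteq> []\<close> by (auto simp: Cons_in_box_iff)
  define y where "y = a - op_app R c x"
  have "dotop R Cs pt < y" "y \<le> dotop R Cs qt"
    using p(2) qt(2) unfolding pt(1) y_def dotop_Cons by linarith+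
  moreover have "dotop R Cs w \<le> dotop R Cs pt" if w: "w \<in> ?B'" "dotop R Cs w < y" for w
  proof (cases "(\<sigma> ^^ D) (hd w) \<le> x")
    case True
    moreover have "dotop R (c # Cs) (x # w) < a" using w(2) unfolding y_def dotop_Cons by simp
    moreover have "x # w \<in> ?B" using True w(1) pt(2) \<open>Cs \<noteq> []\<close> by (simp add: Cons_in_box_iff)
    ultimately have "dotop R (c # Cs) (x # w) \<le> dotop R (c # Cs) p" using p(3) by blast
    then show ?thesis unfolding pt(1) dotop_Cons by simp
  next
    case False
    then have "hd qt < hd w" "hd pt < hd w"
      using qt'(2) pt(3) funpow_succR_mono[of _ _ D] by (meson le_trans not_le)+
    with dom w(1) pt(4) qt'(1) \<open>y \<le> dotop R Cs qt\<close> w(2) show ?thesis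
      unfolding hd_dominant_def dotop_uminus length_map by force
  qed
  ultimately have "Pfun R Rt D Cs y = pt" using Pfun_eqI[OF inj_tl pt(4)] by blast
  then show ?thesis using Pa pt(1) unfolding y_def by simp
qed

theorem mainTheorem19:
  fixes R Rt :: "nat set" and d n :: nat and A :: "int list list"
  assumes "infinite R" and "sparse R" and "cong_periodic R"
    and "d > 0" and "sub_d Rt d R"
    and "n \<ge> 2" and "length A = n" and "\<forall>i<n. \<not> op_zero R (A ! i)"
  shows "\<exists>D0. \<forall>D. d dvd D \<and> D \<ge> D0 \<longrightarrow>
     (\<forall>a::int.
        ereal (real_of_int a) > Inf ((\<lambda>z. ereal (real_of_int (dotop R A z))) ` box R Rt n D) \<and>
        a \<le> Max {dotop R A z | z. z \<in> box R Rt n D \<and> hd z = hd (Pfun R Rt D A a)}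
        \<longrightarrow> Pfun R Rt D (tl A) (a - op_app R (hd A) (hd (Pfun R Rt D A a)))
            = tl (Pfun R Rt D A a))"
proof -
  interpret sparse_set R using assms(1,2) by unfold_locales
  have RtR: "Rt \<subseteq> R"
    using assms(5) enumerate_in_set[OF assms(1)] unfolding sub_d_def by auto
  obtain c c' Cs where A: "A = c # c' # Cs" and n: "n = length (c # c' # Cs)"
    using assms(6,7) by (metis Suc_le_length_iff numeral_2_eq_2)
  have nonzero: "\<forall>c\<in>set A. \<not> op_zero R c" using assms(7,8) by (metis in_set_conv_nth)
  have "eventually (\<lambda>D. inj_on (dotop R A) (box R Rt (length A) D) \<and>
      inj_on (dotop R (c' # Cs)) (box R Rt (length (c' # Cs)) D) \<and>
      (hd_dominant R Rt D (c' # Cs) \<or> hd_dominant R Rt D (map (map uminus) (c' # Cs)))) sequentially"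
    (is "eventually ?good sequentially")
    using eventually_inj_on_dotop[OF RtR nonzero] eventually_inj_on_dotop[OF RtR, of "c' # Cs"]
      eventually_hd_dominant_signed[OF RtR, of c' Cs] nonzero
    unfolding A by (simp add: eventually_conj del: list.map)
  then obtain D0 where D0: "\<forall>D\<ge>D0. ?good D"
    unfolding eventually_sequentially by blast
  show ?thesis
    by (intro exI[of _ D0] allI impI, elim conjE) (use D0 Pfun_Cons_tl[of c "c' # Cs" Rt] in \<open>simp add: A n\<close>)
qed

end
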